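(* Let $n\ge 2$ be a power of $2$, $m=2n$, $R=\mathbb{Z}[\zeta_m]\cong\mathbb{Z}[x]/(x^n+1)$, and let $q$ be a prime with $q\equiv 1 \pmod 4$. Let $\mathfrak{a}\mid qR$ be an ideal with $R/\mathfrak{a}\cong\mathbb{F}_{q^k}$, and let $\rho:R_q=R/qR\to R/\mathfrak{a}$ be the quotient map. Suppose the error distribution $\chi$ on $R_q$ is formed on the $\zeta$-basis with coefficients distributed according to a distribution $\chi_0$ on $\mathbb{F}_q$. Then $\rho(\zeta^k)\in\mathbb{F}_q$, the elements $1,\rho(\zeta),\dots,\rho(\zeta)^{k-1}$ form an $\mathbb{F}_q$-basis of $\mathbb{F}_{q^k}$, and the pushforward distribution $\chi':=\rho(\chi)$ on $\mathbb{F}_{q^k}$ is formed on this $\zeta$-basis with independent coefficients, each distributed according to $\chi_0'$, where $\chi_0'$ is the distribution of $\sum_{i=0}^{n/k-1}\rho(\zeta^k)^i X_i$ with $X_0,\dots,X_{n/k-1}$ independent and each distributed according to $\chi_0$.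
   Context: $\zeta=\zeta_m$ denotes a primitive $m$-th root of unity in $R$ and also its image in any quotient of $R$. The $\zeta$-basis of $R_q$ over $\mathbb{F}_q$ is $1,\zeta,\dots,\zeta^{n-1}$; for a quotient $R/\mathfrak{a}$ of $\mathbb{F}_q$-dimension $d$ the $\zeta$-basis is $1,\zeta,\dots,\zeta^{d-1}$. A distribution $\chi$ on a ring with $\zeta$-basis $1,\zeta,\ldots,\zeta^{d-1}$ is "formed on the $\zeta$-basis with coefficients distributed according to $\chi_0$" if a sample is $\sum_{i=0}^{d-1} e_i\zeta^i$ with $e_0,\dots,e_{d-1}$ independent and each distributed according to $\chi_0$. *)

theory Defs
  imports "HOL-Probability.Product_PMF" "HOL-Computational_Algebra.Polynomial_Factorial"
begin

text \<open>R_q = F_q[x]/(x^n+1); elements are represented by reduced polynomials (mod x^n+1),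
  zeta is the class of x.\<close>

definition xn1 :: "nat \<Rightarrow> 'a::field poly" where
  "xn1 n = monom 1 n + 1"

definition zeta_pow_Rq :: "nat \<Rightarrow> nat \<Rightarrow> 'a::field poly" where
  "zeta_pow_Rq n i = [:0, 1:] ^ i mod xn1 n"

definition formed_on_basis :: "nat \<Rightarrow> (nat \<Rightarrow> 'a::field poly) \<Rightarrow> 'a pmf \<Rightarrow> 'a poly pmf" where
  "formed_on_basis d b chi0 =
     map_pmf (\<lambda>e. \<Sum>i<d. smult (e i) (b i)) (Pi_pmf {..<d} 0 (\<lambda>_. chi0))"

end

theory Submission
  imports Defs
begin

text \<open>Let \<open>f\<close> be an irreducible factor of degree \<open>k\<close> of \<open>x^n + 1\<close> over \<open>F_q\<close>, where
  \<open>n = 2^e\<close>, and write \<open>q - 1 = 2^s u\<close> with \<open>u\<close> odd; \<open>q \<equiv> 1 (mod 4)\<close> means \<open>s \<ge> 2\<close>.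
  Modulo \<open>f\<close> the class \<open>\<zeta>\<close> of \<open>x\<close> has order exactly \<open>2n\<close>. For \<open>K = 2^(e+1-s)\<close>,
  \<open>2n\<close> divides \<open>K (q - 1)\<close>, so \<open>\<zeta>^K\<close> is fixed by Frobenius and hence is a constant \<open>r\<close>;
  then \<open>f\<close> divides \<open>x^K - r\<close> and \<open>k \<le> K\<close>. Conversely \<open>2n\<close> divides \<open>q^k - 1\<close>, and
  2-adic lifting the exponent gives \<open>K dvd k\<close>. So \<open>k = K\<close> is a proper divisor of \<open>n\<close> and
  \<open>\<zeta>^k = r\<close>. Reducing \<open>\<Sum>i<n. e_i \<zeta>^i\<close> modulo \<open>f\<close> puts \<open>\<Sum>a<n/k. r^a e_(a k + j)\<close> at
  \<open>\<zeta>^j\<close>, and for distinct \<open>j\<close> these sums involve disjoint sets of the independent \<open>e_i\<close>.\<close>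

section \<open>Finite fields and 2-adic arithmetic\<close>

lemma power_card_eq_self:
  fixes a :: "'a::{field,finite}"
  shows "a ^ CARD('a) = a"
proof (cases "a = 0")
  case False
  have "(\<Prod>y\<in>UNIV-{0}. a * y) = (\<Prod>y\<in>UNIV-{0}. y)"
    by (rule prod.reindex_bij_witness[of _ "\<lambda>y. y / a" "\<lambda>y. a * y"]) (use False in auto)
  then have "a ^ (CARD('a) - 1) * (\<Prod>y\<in>UNIV-{0}. y) = (\<Prod>y\<in>UNIV-{0}. y)"
    by (simp add: prod.distrib card_Diff_subset)
  moreover have "(\<Prod>y\<in>UNIV-{0}. y) \<noteq> (0::'a)" by simp
  ultimately have "a ^ (CARD('a) - 1) = 1"
    using mult_cancel_right2 by blast
  moreover have "CARD('a) = Suc (CARD('a) - 1)"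
    using finite_UNIV_card_ge_0[where 'a='a] by simp
  ultimately show ?thesis
    by (metis power_Suc mult_1_right)
qed simp

lemma of_nat_card_eq_0: "(of_nat CARD('a) :: 'a::{comm_ring_1,finite}) = 0"
proof -
  have "(\<Sum>x\<in>UNIV. 1 + x) = (\<Sum>x\<in>UNIV. x::'a)"
    by (rule sum.reindex_bij_witness[of _ "\<lambda>x. x - 1" "\<lambda>x. 1 + x"]) auto
  then show ?thesis by (simp add: sum.distrib)
qed

lemma two_neq_zero_if_odd_card:
  assumes "odd CARD('a::{comm_ring_1,finite})"
  shows "(2::'a) \<noteq> 0"
proof
  assume two: "(2::'a) = 0"
  obtain t where "CARD('a) = 2 * t + 1" using assms oddE by blast
  then have "(of_nat CARD('a) :: 'a) = 2 * of_nat t + 1" by simp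
  then show False using two of_nat_card_eq_0[where 'a='a] by simp
qed

lemma nat_two_power_odd_decomp:
  fixes m :: nat
  assumes "m \<noteq> 0"
  obtains v w where "m = 2 ^ v * w" and "odd w"
proof -
  have "\<not> is_unit (2::nat)" by simp
  from multiplicity_decompose'[OF assms this] show thesis using that by blast
qed

lemma odd_sum_powers_iff:
  fixes x :: "'a::semiring_parity"
  assumes "odd x"
  shows "odd (\<Sum>i<w. x ^ i) \<longleftrightarrow> odd w"
  by (induction w) (auto simp: assms)

lemma power_two_power_minus_one:
  fixes q :: int
  assumes "q mod 4 = 1"
  shows "\<exists>c. odd c \<and> q ^ 2 ^ v - 1 = 2 ^ v * (q - 1) * c"
proof (induction v)
  case 0
  show ?case by (intro exI[of _ 1]) simp
next
  case (Suc v)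
  then obtain c where c: "odd c" "q ^ 2 ^ v - 1 = 2 ^ v * (q - 1) * c" by blast
  have "q ^ 2 ^ v mod 4 = 1"
    using assms power_mod[of q 4 "2 ^ v"] by simp
  then have "q ^ 2 ^ v + 1 = 2 * (2 * (q ^ 2 ^ v div 4) + 1)"
    using div_mult_mod_eq[of "q ^ 2 ^ v" 4] by presburger
  then obtain c' where c': "q ^ 2 ^ v + 1 = 2 * c'" "odd c'"
    by fastforce
  have "q ^ 2 ^ Suc v - 1 = (q ^ 2 ^ v - 1) * (q ^ 2 ^ v + 1)"
    by (simp add: power_mult algebra_simps power2_eq_square)
  also have "\<dots> = 2 ^ Suc v * (q - 1) * (c * c')"
    using c c' by simp
  finally show ?case
    using c c' by (intro exI[of _ "c * c'"]) simp
qed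

lemma two_power_dvd_power_minus_one:
  fixes q :: nat
  assumes q4: "q mod 4 = 1" and "0 < m" and q1: "q - 1 = 2 ^ s * u" "odd u"
    and dvd: "2 ^ t dvd q ^ m - 1"
  shows "2 ^ (t - s) dvd m"
proof -
  obtain v w where m: "m = 2 ^ v * w" and "odd w"
    using nat_two_power_odd_decomp \<open>0 < m\<close> by blast
  have "q \<ge> 1" using q4 by (cases q) auto
  define Q where "Q = int q ^ 2 ^ v"
  obtain c where c: "odd c" "Q - 1 = 2 ^ v * (int q - 1) * c"
    using power_two_power_minus_one[of "int q" v] q4 zmod_int[of q 4] unfolding Q_def by auto
  have q1': "int q - 1 = 2 ^ s * int u"
    using q1 \<open>q \<ge> 1\<close> by (metis of_nat_1 of_nat_diff of_nat_mult of_nat_numeral of_nat_power)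
  have "odd Q" using q4 unfolding Q_def by (simp add: odd_iff_mod_2_eq_one) presburger
  have "int (q ^ m - 1) = Q ^ w - 1"
    using \<open>q \<ge> 1\<close> by (simp add: of_nat_diff m Q_def power_mult)
  also have "\<dots> = (Q - 1) * (\<Sum>i<w. Q ^ i)"
    by (rule power_diff_1_eq)
  also have "\<dots> = 2 ^ (v + s) * (int u * c * (\<Sum>i<w. Q ^ i))"
    by (simp add: c q1' power_add)
  finally have eq: "int (q ^ m - 1) = 2 ^ (v + s) * (int u * c * (\<Sum>i<w. Q ^ i))" .
  have "odd (int u * c * (\<Sum>i<w. Q ^ i))"
    using odd_sum_powers_iff[OF \<open>odd Q\<close>] \<open>odd w\<close> \<open>odd u\<close> \<open>odd c\<close> by simp
  moreover have "2 ^ t dvd int (q ^ m - 1)"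
    using dvd by (metis of_nat_dvd_iff of_nat_numeral of_nat_power)
  ultimately have "(2::int) ^ t dvd 2 ^ (v + s)"
    unfolding eq by (simp add: coprime_dvd_mult_left_iff)
  then have "t \<le> v + s"
    by (simp add: dvd_power_iff)
  then have "2 ^ (t - s) dvd (2::nat) ^ v"
    by (simp add: le_imp_power_dvd)
  then show ?thesis
    by (simp add: m)
qed

section \<open>Polynomials over a finite field\<close>

lemma prime_elem_dvd_prod_iff:
  fixes p :: "'b::comm_semiring_1"
  assumes "prime_elem p" "finite A"
  shows "p dvd prod g A \<longleftrightarrow> (\<exists>x\<in>A. p dvd g x)"
  using assms(2)
proof (induction A rule: finite_induct)
  case empty
  then show ?case using assms(1) by (simp add: prime_elem_not_unit)
next
  case (insert x A)
  then show ?case using assms(1) by (simp add: prime_elem_dvd_mult_iff)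
qed

lemma pcompose_power_left: "pcompose (p ^ n) r = pcompose p r ^ n"
  by (induction n) (simp_all add: pcompose_mult pcompose_1)

lemma coeff_sum_monom: "coeff (\<Sum>j<d. monom (c j) j) i = (if i < d then c i else 0)"
  by (simp add: coeff_sum coeff_monom)

lemma degree_sum_monom_less:
  assumes "0 < d"
  shows "degree (\<Sum>j<d. monom (c j) j) < d"
proof -
  have "degree (\<Sum>j<d. monom (c j) j) \<le> d - 1"
    by (rule degree_le) (auto simp: coeff_sum_monom)
  then show ?thesis using assms by linarith
qed

lemma bij_betw_sum_monom:
  assumes "0 < d"
  shows "bij_betw (\<lambda>c. \<Sum>j<d. monom (c j) j) ({..<d} \<rightarrow>\<^sub>E UNIV) {p. degree p < d}"
proof (rule bij_betw_byWitness[where f' = "\<lambda>p. restrict (coeff p) {..<d}"])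
  show "\<forall>c\<in>{..<d} \<rightarrow>\<^sub>E UNIV. restrict (coeff (\<Sum>j<d. monom (c j) j)) {..<d} = c"
    by (auto simp: coeff_sum_monom PiE_def extensional_def)
  show "\<forall>p\<in>{p. degree p < d}. (\<Sum>j<d. monom (restrict (coeff p) {..<d} j) j) = p"
    by (auto intro!: poly_eqI simp: coeff_sum_monom coeff_eq_0)
  show "(\<lambda>c. \<Sum>j<d. monom (c j) j) ` ({..<d} \<rightarrow>\<^sub>E UNIV) \<subseteq> {p. degree p < d}"
    using degree_sum_monom_less[OF assms] by auto
  show "(\<lambda>p. restrict (coeff p) {..<d}) ` {p. degree p < d} \<subseteq> {..<d} \<rightarrow>\<^sub>E UNIV"
    by (auto split: if_splits)
qed

lemma card_degree_less:
  assumes "0 < d"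
  shows "finite {p::'a::{comm_monoid_add,finite} poly. degree p < d}"
    and "card {p::'a::{comm_monoid_add,finite} poly. degree p < d} = CARD('a) ^ d"
proof -
  have fin: "finite ({..<d} \<rightarrow>\<^sub>E (UNIV::'a set))" by (simp add: finite_PiE)
  show "finite {p::'a poly. degree p < d}"
    using bij_betw_finite[OF bij_betw_sum_monom[OF assms]] fin by blast
  have "card {p::'a poly. degree p < d} = card ({..<d} \<rightarrow>\<^sub>E (UNIV::'a set))"
    using bij_betw_same_card[OF bij_betw_sum_monom[OF assms]] by (rule sym)
  then show "card {p::'a poly. degree p < d} = CARD('a) ^ d"
    by (simp add: card_PiE)
qed

lemma card_nonzero_degree_less:
  assumes "0 < d"
  shows "finite {p::'a::{comm_monoid_add,finite} poly. p \<noteq> 0 \<and> degree p < d}"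
    and "card {p::'a::{comm_monoid_add,finite} poly. p \<noteq> 0 \<and> degree p < d} = CARD('a) ^ d - 1"
proof -
  have "{p::'a poly. degree p < d} = insert 0 {p. p \<noteq> 0 \<and> degree p < d}"
    using assms by auto
  then show "finite {p::'a poly. p \<noteq> 0 \<and> degree p < d}"
    and "card {p::'a poly. p \<noteq> 0 \<and> degree p < d} = CARD('a) ^ d - 1"
    using card_degree_less[OF assms, where 'a='a] by simp_all
qed

lemma degree_irreducible_pos:
  fixes f :: "'a::field poly"
  assumes "irreducible f"
  shows "0 < degree f"
  using assms by (metis gr0I irreducible_def is_unit_iff_degree)

lemma fermat_mod_irreducible:
  fixes f p :: "'a::{field,finite} poly"
  assumes irr: "irreducible f" and "\<not> f dvd p"
  shows "p ^ (CARD('a) ^ degree f - 1) mod f = 1"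
proof -
  have pr: "prime_elem f" using irr by (rule field_poly_irreducible_imp_prime)
  have d: "0 < degree f" using irr by (rule degree_irreducible_pos)
  then have "f \<noteq> 0" by auto
  define S where "S = {b::'a poly. b \<noteq> 0 \<and> degree b < degree f}"
  have "finite S" and card_S: "card S = CARD('a) ^ degree f - 1"
    using card_nonzero_degree_less[OF d, where 'a='a] by (simp_all add: S_def)
  have S_not_dvd: "\<not> f dvd b" if "b \<in> S" for b
    using that dvd_imp_degree_le[of f b] by (auto simp: S_def)
  have mod_S: "b mod f \<in> S" if "\<not> f dvd b" for b
    using that degree_mod_less'[OF \<open>f \<noteq> 0\<close>] by (auto simp: S_def mod_eq_0_iff_dvd)
  define a where "a = p mod f"
  have "a \<in> S" unfolding a_def using assms(2) by (rule mod_S)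
  define h where "h b = a * b mod f" for b
  have h_S: "h ` S \<subseteq> S"
  proof
    fix c assume "c \<in> h ` S"
    then obtain b where "b \<in> S" "c = a * b mod f" by (auto simp: h_def)
    moreover have "\<not> f dvd a * b"
      using S_not_dvd[OF \<open>a \<in> S\<close>] S_not_dvd[OF \<open>b \<in> S\<close>] pr by (simp add: prime_elem_dvd_mult_iff)
    ultimately show "c \<in> S" using mod_S by blast
  qed
  have "inj_on h S"
  proof (rule inj_onI)
    fix b b' assume "b \<in> S" "b' \<in> S" "h b = h b'"
    then have "f dvd a * (b - b')" by (simp add: h_def mod_eq_dvd_iff right_diff_distrib)
    then have "f dvd b - b'" using S_not_dvd[OF \<open>a \<in> S\<close>] pr by (simp add: prime_elem_dvd_mult_iff)
    moreover have "b mod f = b" "b' mod f = b'"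
      using \<open>b \<in> S\<close> \<open>b' \<in> S\<close> by (auto simp: S_def mod_poly_less)
    ultimately show "b = b'" by (metis mod_eq_dvd_iff)
  qed
  with \<open>finite S\<close> h_S have "h ` S = S" by (rule endo_inj_surj)
  then have "\<Prod>S mod f = prod h S mod f"
    using prod.reindex[OF \<open>inj_on h S\<close>, of id] by simp
  also have "\<dots> = (\<Prod>b\<in>S. a * b) mod f"
    unfolding h_def by (rule mod_prod_eq)
  also have "(\<Prod>b\<in>S. a * b) = a ^ card S * \<Prod>S"
    by (simp add: prod.distrib)
  finally have "f dvd (a ^ card S - 1) * \<Prod>S"
    by (simp add: mod_eq_dvd_iff left_diff_distrib dvd_diff_commute)
  moreover have "\<not> f dvd \<Prod>S"
    using prime_elem_dvd_prod_iff[OF pr \<open>finite S\<close>] S_not_dvd by auto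
  ultimately have "a ^ card S mod f = 1 mod f"
    using pr by (simp add: prime_elem_dvd_mult_iff mod_eq_dvd_iff)
  also have "1 mod f = 1" using d by (simp add: mod_poly_less)
  finally show ?thesis
    by (simp add: a_def card_S power_mod)
qed

lemma X_power_card_minus_X:
  "([:0, 1:] :: 'a::{field,finite} poly) ^ CARD('a) - [:0, 1:] = (\<Prod>c\<in>UNIV. [:-c, 1:])"
proof (rule poly_eqI_degree_lead_coeff[where n = "CARD('a)" and A = UNIV])
  have "card {0::'a, 1} \<le> CARD('a)" by (rule card_mono) auto
  then have "2 \<le> CARD('a)" by simp
  have X_power: "([:0, 1:] :: 'a poly) ^ CARD('a) = monom 1 (CARD('a))"
    by (simp add: monom_altdef)
  have deg_prod: "degree (\<Prod>c\<in>UNIV. [:-c, 1:] :: 'a poly) = CARD('a)"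
    by (simp add: degree_prod_eq_sum_degree)
  then show "degree (\<Prod>c\<in>UNIV. [:-c, 1:] :: 'a poly) \<le> CARD('a)" by simp
  show "degree (([:0, 1:] :: 'a poly) ^ CARD('a) - [:0, 1:]) \<le> CARD('a)"
    using \<open>2 \<le> CARD('a)\<close> by (intro degree_diff_le) (auto simp: X_power degree_monom_eq)
  have "lead_coeff (\<Prod>c\<in>UNIV. [:-c, 1:] :: 'a poly) = 1"
    by (simp add: lead_coeff_prod)
  then have "coeff (\<Prod>c\<in>UNIV. [:-c, 1:] :: 'a poly) CARD('a) = 1"
    using deg_prod by metis
  then show "coeff (([:0, 1:] :: 'a poly) ^ CARD('a) - [:0, 1:]) CARD('a) =
      coeff (\<Prod>c\<in>UNIV. [:-c, 1:]) CARD('a)"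
    using \<open>2 \<le> CARD('a)\<close> by (simp add: X_power coeff_diff coeff_pCons split: nat.split)
  show "CARD('a) \<le> card (UNIV :: 'a set)" by simp
  show "poly ([:0, 1:] ^ CARD('a) - [:0, 1:]) z = poly (\<Prod>c\<in>UNIV. [:-c, 1:]) z" for z :: 'a
    by (simp add: poly_prod power_card_eq_self)
qed

lemma mod_irreducible_const_if_power_card:
  fixes f p :: "'a::{field,finite} poly"
  assumes irr: "irreducible f" and "p ^ CARD('a) mod f = p mod f"
  shows "\<exists>c. p mod f = [:c:]"
proof -
  have pr: "prime_elem f" using irr by (rule field_poly_irreducible_imp_prime)
  have "(\<Prod>c\<in>UNIV. p - [:c:]) = pcompose ([:0, 1:] ^ CARD('a) - [:0, 1:]) p"
    unfolding X_power_card_minus_X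
    by (simp add: pcompose_prod pcompose_pCons diff_conv_add_uminus add.commute minus_pCons)
  also have "\<dots> = p ^ CARD('a) - p"
    by (simp add: pcompose_diff pcompose_power_left pcompose_pCons)
  finally have "f dvd (\<Prod>c\<in>UNIV. p - [:c:])"
    using assms(2) by (simp add: mod_eq_dvd_iff)
  then obtain c where "f dvd p - [:c:]"
    using prime_elem_dvd_prod_iff[OF pr finite_class.finite_UNIV, of "\<lambda>c. p - [:c:]"] by blast
  then have "p mod f = [:c:] mod f" by (simp add: mod_eq_dvd_iff)
  also have "[:c:] mod f = [:c:]"
    using degree_irreducible_pos[OF irr] by (simp add: mod_poly_less)
  finally show ?thesis by blast
qed

lemma power_mod_eq_one_mult:
  fixes f x :: "'a::field poly"
  assumes "x ^ N mod f = 1"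
  shows "x ^ (N * c) mod f = 1"
proof -
  have "x ^ (N * c) mod f = (x ^ N mod f) ^ c mod f" by (simp add: power_mult power_mod)
  also have "\<dots> = 1 mod f" using assms by simp
  finally show ?thesis using assms by (metis mod_mod_trivial)
qed

section \<open>Irreducible factors of \<open>x^(2^e) + 1\<close>\<close>

lemma two_power_dvd_if_power_eq_minus_one:
  fixes f x :: "'a::field poly"
  assumes x: "f dvd x ^ 2 ^ e + 1" and "(2::'a) \<noteq> 0" and "0 < degree f"
    and "x ^ j mod f = 1"
  shows "2 ^ (e + 1) dvd j"
proof (rule ccontr)
  assume "\<not> 2 ^ (e + 1) dvd j"
  then have "j \<noteq> 0" by (metis dvd_0_right)
  then obtain w u where j: "j = 2 ^ w * u" and "odd u"
    using nat_two_power_odd_decomp by blast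
  have "w \<le> e"
    using \<open>\<not> 2 ^ (e + 1) dvd j\<close> unfolding j
    by (metis dvd_mult2 le_imp_power_dvd not_less_eq_eq Suc_eq_plus1)
  then have "j * 2 ^ (e - w) = 2 ^ e * u"
    unfolding j by (simp add: mult.commute mult.left_commute flip: power_add)
  then have "x ^ (2 ^ e * u) mod f = 1"
    using power_mod_eq_one_mult[OF assms(4)] by metis
  moreover have "x ^ (2 ^ e * u) mod f = (-1) ^ u mod f"
    using x by (metis (no_types) power_mult power_mod add_diff_cancel_left' mod_eq_dvd_iff
        diff_minus_eq_add)
  moreover have "1 mod f = 1"
    using \<open>0 < degree f\<close> by (simp add: mod_poly_less)
  ultimately have "f dvd (-1) ^ u - 1"
    by (metis mod_eq_dvd_iff)
  then have "f dvd - [:2:]"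
    using \<open>odd u\<close> by (simp add: numeral_poly)
  then have "f dvd [:2:]"
    by (simp only: dvd_minus_iff)
  then show False
    using dvd_imp_degree_le[of f "[:2:]"] assms(2,3) by simp
qed

lemma power_mod_irreducible_const:
  fixes f x :: "'a::{field,finite} poly"
  assumes "irreducible f" and "x ^ N mod f = 1" and "N dvd K * (CARD('a) - 1)"
  shows "\<exists>r. x ^ K mod f = [:r:]"
proof -
  obtain c where "K * (CARD('a) - 1) = N * c" using assms(3) by blast
  then have one: "x ^ (K * (CARD('a) - 1)) mod f = 1"
    using power_mod_eq_one_mult[OF assms(2)] by simp
  have "K * CARD('a) = K + K * (CARD('a) - 1)"
    using finite_UNIV_card_ge_0[where 'a='a] by (cases "CARD('a)") auto
  then have "(x ^ K) ^ CARD('a) = x ^ K * x ^ (K * (CARD('a) - 1))"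
    by (simp flip: power_mult power_add)
  then have "(x ^ K) ^ CARD('a) mod f = x ^ K mod f"
    by (metis one mod_mult_right_eq mult.right_neutral)
  then show ?thesis
    using mod_irreducible_const_if_power_card[OF assms(1)] by blast
qed

lemma degree_le_if_dvd_X_power_minus_const:
  fixes f :: "'a::field poly"
  assumes "f dvd [:0, 1:] ^ K - [:r:]" and "0 < K"
  shows "degree f \<le> K"
proof -
  have "[:0, 1:] ^ K - [:r:] = monom 1 K - monom r 0"
    by (simp add: monom_altdef)
  moreover have "coeff (monom 1 K - monom r 0) K = 1"
    using \<open>0 < K\<close> by simp
  then have "monom 1 K - monom r 0 \<noteq> 0" by (metis coeff_0 zero_neq_one)
  moreover have "degree (monom 1 K - monom r 0) \<le> K"
    by (intro degree_diff_le) (auto intro: order.trans[OF degree_monom_le])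
  ultimately show ?thesis
    using dvd_imp_degree_le[OF assms(1)] by simp
qed

lemma two_power_dvd_card_power_degree_minus_one:
  fixes f x :: "'a::{field,finite} poly"
  assumes irr: "irreducible f" and x: "f dvd x ^ 2 ^ e + 1" and "(2::'a) \<noteq> 0"
  shows "2 ^ (e + 1) dvd CARD('a) ^ degree f - 1"
proof -
  have "\<not> f dvd x"
  proof
    assume "f dvd x"
    moreover have "x dvd x ^ 2 ^ e" by (intro dvd_power) simp
    ultimately have "f dvd x ^ 2 ^ e" by (rule dvd_trans)
    then have "f dvd 1" using x by (simp add: dvd_add_right_iff)
    then show False using irr by (simp add: irreducible_def)
  qed
  then show ?thesis
    using two_power_dvd_if_power_eq_minus_one[OF x \<open>(2::'a) \<noteq> 0\<close>
        degree_irreducible_pos[OF irr] fermat_mod_irreducible[OF irr]] by simp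
qed

lemma power_double_mod_eq_one:
  fixes f x :: "'a::field poly"
  assumes "f dvd x ^ m + 1" and "0 < degree f"
  shows "x ^ (2 * m) mod f = 1"
proof -
  have "x ^ (2 * m) - 1 = (x ^ m + 1) * (x ^ m - 1)"
    by (simp add: power_mult algebra_simps power2_eq_square mult.commute)
  then have "x ^ (2 * m) mod f = 1 mod f"
    using assms(1) by (simp add: mod_eq_dvd_iff)
  then show ?thesis
    using assms(2) by (simp add: mod_poly_less)
qed

lemma X_power_mod_irreducible_const:
  fixes f :: "'a::{field,finite} poly"
  assumes irr: "irreducible f" and "[:0, 1:] ^ N mod f = 1" and "N dvd K * (CARD('a) - 1)"
    and "0 < K"
  shows "degree f \<le> K" and "\<exists>r. [:0, 1:] ^ K mod f = [:r:]"
proof -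
  obtain r where r: "[:0, 1:] ^ K mod f = [:r:]"
    using power_mod_irreducible_const[OF assms(1-3)] by blast
  then show "\<exists>r. [:0, 1:] ^ K mod f = [:r:]" by blast
  have "[:r:] mod f = [:r:]"
    using degree_irreducible_pos[OF irr] by (simp add: mod_poly_less)
  with r have "f dvd [:0, 1:] ^ K - [:r:]" by (metis mod_eq_dvd_iff)
  then show "degree f \<le> K"
    using \<open>0 < K\<close> by (rule degree_le_if_dvd_X_power_minus_const)
qed

lemma irreducible_factor_X_power_plus_one:
  fixes f :: "'a::{field,finite} poly"
  assumes n: "n = 2 ^ e" "2 \<le> n" and q4: "CARD('a) mod 4 = 1"
    and fd: "f dvd [:0, 1:] ^ n + 1" and irr: "irreducible f"
  shows "degree f dvd n" and "degree f < n" and "\<exists>r. [:0, 1:] ^ degree f mod f = [:r:]"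
proof -
  define q where "q = CARD('a)"
  have "2 \<le> q" unfolding q_def using card_mono[of UNIV "{0::'a, 1}"] by simp
  have "odd q" using q4 unfolding q_def by presburger
  then have "(2::'a) \<noteq> 0" unfolding q_def by (rule two_neq_zero_if_odd_card)
  obtain s u where q1: "q - 1 = 2 ^ s * u" and "odd u"
    using nat_two_power_odd_decomp[of "q - 1"] \<open>2 \<le> q\<close> by auto
  have "2 \<le> s"
  proof (rule ccontr)
    assume "\<not> 2 \<le> s"
    then have "s = 0 \<or> s = 1" by auto
    moreover have "4 dvd 2 ^ s * u" using q4 q1 \<open>2 \<le> q\<close> by (simp add: q_def) presburger
    ultimately show False using \<open>odd u\<close> by auto
  qed
  define K :: nat where "K = 2 ^ (e + 1 - s)"
  have "2 * n dvd K * 2 ^ s"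
    using n by (simp add: K_def le_imp_power_dvd flip: power_add power_Suc)
  also have "\<dots> dvd K * (q - 1)" using q1 by simp
  finally have "degree f \<le> K" and r: "\<exists>r. [:0, 1:] ^ K mod f = [:r:]"
    using X_power_mod_irreducible_const[OF irr power_double_mod_eq_one[OF fd]]
      degree_irreducible_pos[OF irr] by (simp_all add: q_def K_def)
  have "K dvd degree f"
    using two_power_dvd_power_minus_one[OF _ degree_irreducible_pos[OF irr] q1 \<open>odd u\<close>]
      two_power_dvd_card_power_degree_minus_one[OF irr _ \<open>(2::'a) \<noteq> 0\<close>] q4 fd n
    by (simp add: K_def q_def)
  then have "degree f = K"
    using \<open>degree f \<le> K\<close> degree_irreducible_pos[OF irr] by (simp add: dvd_imp_le le_antisym)
  moreover have "e + 1 - s < e" using \<open>2 \<le> s\<close> n by (cases e) auto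
  ultimately show "degree f dvd n" "degree f < n" "\<exists>r. [:0, 1:] ^ degree f mod f = [:r:]"
    using n r by (simp_all add: K_def le_imp_power_dvd)
qed

section \<open>Reduction of the error distribution\<close>

lemma bij_betw_mult_add:
  fixes k m :: nat
  shows "bij_betw (\<lambda>(j, a). a * k + j) ({..<k} \<times> {..<m}) {..<m * k}"
proof (rule bij_betw_byWitness[where f' = "\<lambda>i. (i mod k, i div k)"])
  show "(\<lambda>(j, a). a * k + j) ` ({..<k} \<times> {..<m}) \<subseteq> {..<m * k}"
  proof clarsimp
    fix j a assume "j < k" "a < m"
    then have "a * k + j < (a + 1) * k" by simp
    also have "\<dots> \<le> m * k" using \<open>a < m\<close> by (intro mult_le_mono1) simp
    finally show "a * k + j < m * k" .
  qed
  show "(\<lambda>i. (i mod k, i div k)) ` {..<m * k} \<subseteq> {..<k} \<times> {..<m}"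
    by (auto simp: less_mult_imp_div_less) (metis mod_less_divisor mult_zero_right not_less_zero gr0I)
qed auto

lemma sum_lessThan_mult:
  fixes k m :: nat
  shows "(\<Sum>i<m * k. g i) = (\<Sum>j<k. \<Sum>a<m. g (a * k + j))"
  by (simp add: sum.reindex_bij_betw[OF bij_betw_mult_add, symmetric] sum.cartesian_product
      case_prod_unfold)

lemma dvd_monom_minus_monom:
  fixes f :: "'a::field poly"
  assumes "f dvd [:0, 1:] ^ k - [:r:]"
  shows "f dvd monom c (a * k + j) - monom (r ^ a * c) j"
proof -
  have "[:0, 1:] ^ k - [:r:] dvd ([:0, 1:] ^ k) ^ a - [:r:] ^ a"
    unfolding power_diff_sumr2 by (rule dvd_triv_left)
  then have "f dvd ([:0, 1:] ^ k) ^ a - [:r ^ a:]"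
    using dvd_trans[OF assms] by (simp add: poly_const_pow)
  then have "f dvd smult c ([:0, 1:] ^ j * (([:0, 1:] ^ k) ^ a - [:r ^ a:]))"
    by (intro dvd_smult dvd_mult)
  also have "smult c ([:0, 1:] ^ j * (([:0, 1:] ^ k) ^ a - [:r ^ a:])) =
      monom c (a * k + j) - monom (r ^ a * c) j"
    by (simp add: monom_altdef power_add algebra_simps smult_diff_right flip: power_mult)
  finally show ?thesis .
qed

lemma mod_sum_monom_reduce:
  fixes f :: "'a::field poly"
  assumes r: "[:0, 1:] ^ k mod f = [:r:]" and "degree f = k" and "0 < k"
  shows "(\<Sum>i<m * k. monom (e i) i) mod f = (\<Sum>j<k. monom (\<Sum>a<m. r ^ a * e (a * k + j)) j)"
    (is "?p mod f = ?q")
proof -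
  have "[:r:] mod f = [:r:]" using assms(2,3) by (simp add: mod_poly_less)
  with r have "f dvd [:0, 1:] ^ k - [:r:]" by (metis mod_eq_dvd_iff)
  then have "f dvd (\<Sum>j<k. \<Sum>a<m. monom (e (a * k + j)) (a * k + j) - monom (r ^ a * e (a * k + j)) j)"
    by (intro dvd_sum dvd_monom_minus_monom)
  also have "\<dots> = ?p - ?q"
    by (simp add: sum_lessThan_mult sum_subtractf monom_sum)
  finally have "?p mod f = ?q mod f" by (simp add: mod_eq_dvd_iff)
  also have "?q mod f = ?q"
    using degree_sum_monom_less[OF \<open>0 < k\<close>] assms(2) by (intro mod_poly_less) simp
  finally show ?thesis .
qed

lemma pmf_Pi_pmf_Pi_pmf:
  assumes "finite A" and "finite B"
  shows "pmf (Pi_pmf A (\<lambda>_. d) (\<lambda>_. Pi_pmf B d (\<lambda>_. p))) F =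
    (if \<forall>a b. a \<notin> A \<or> b \<notin> B \<longrightarrow> F a b = d then \<Prod>a\<in>A. \<Prod>b\<in>B. pmf p (F a b) else 0)"
proof (cases "\<forall>a b. a \<notin> A \<or> b \<notin> B \<longrightarrow> F a b = d")
  case True
  then show ?thesis using assms by (simp add: pmf_Pi fun_eq_iff)
next
  case False
  then consider a where "a \<notin> A" "F a \<noteq> (\<lambda>_. d)" | a b where "a \<in> A" "b \<notin> B" "F a b \<noteq> d"
    by (auto simp: fun_eq_iff)
  then show ?thesis
  proof cases
    case 1
    then show ?thesis using assms False by (subst pmf_Pi) auto
  next
    case 2
    then have "pmf (Pi_pmf B d (\<lambda>_. p)) (F a) = 0" using assms by (subst pmf_Pi) auto
    then show ?thesis using 2 assms False by (subst pmf_Pi) (auto intro: prod_zero)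
  qed
qed

lemma pmf_map_inj_on:
  assumes "inj_on f S" and "set_pmf M \<subseteq> S" and "x \<in> S"
  shows "pmf (map_pmf f M) (f x) = pmf M x"
proof (cases "x \<in> set_pmf M")
  case True
  then show ?thesis using assms by (intro pmf_map_inj) (auto intro: inj_on_subset)
next
  case False
  then have "f x \<notin> f ` set_pmf M" using assms by (auto simp: inj_on_def)
  then show ?thesis using False by (simp add: pmf_map_outside set_pmf_eq)
qed

lemma bij_betw_curry_reindex:
  assumes g: "bij_betw g (A \<times> B) C"
  shows "bij_betw (\<lambda>e a b. if a \<in> A \<and> b \<in> B then e (g (a, b)) else d)
    {e. \<forall>i. i \<notin> C \<longrightarrow> e i = d} {F. \<forall>a b. a \<notin> A \<or> b \<notin> B \<longrightarrow> F a b = d}"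
proof (rule bij_betw_byWitness[where f' = "\<lambda>F i. if i \<in> C then case_prod F (inv_into (A \<times> B) g i) else d"])
  have g_inv: "inv_into (A \<times> B) g i \<in> A \<times> B" "g (inv_into (A \<times> B) g i) = i" if "i \<in> C" for i
    using that g by (auto simp: bij_betw_def inv_into_into f_inv_into_f)
  show "\<forall>e\<in>{e. \<forall>i. i \<notin> C \<longrightarrow> e i = d}.
      (\<lambda>i. if i \<in> C then case_prod (\<lambda>a b. if a \<in> A \<and> b \<in> B then e (g (a, b)) else d)
        (inv_into (A \<times> B) g i) else d) = e"
    using g_inv by (fastforce simp: fun_eq_iff case_prod_unfold mem_Times_iff)
  show "\<forall>F\<in>{F. \<forall>a b. a \<notin> A \<or> b \<notin> B \<longrightarrow> F a b = d}.
      (\<lambda>a b. if a \<in> A \<and> b \<in> B then (if g (a, b) \<in> C then case_prod F (inv_into (A \<times> B) g (g (a, b)))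
        else d) else d) = F"
    using g by (auto simp: fun_eq_iff bij_betw_def bij_betw_inv_into_left)
qed auto

lemma Pi_pmf_Pi_pmf_reindex:
  assumes A: "finite A" and B: "finite B" and g: "bij_betw g (A \<times> B) C"
  shows "Pi_pmf A (\<lambda>_. d) (\<lambda>_. Pi_pmf B d (\<lambda>_. p)) =
    map_pmf (\<lambda>e a b. if a \<in> A \<and> b \<in> B then e (g (a, b)) else d) (Pi_pmf C d (\<lambda>_. p))"
    (is "?L = map_pmf ?\<psi> ?M")
proof (rule pmf_eqI)
  fix F
  define S where "S = {e. \<forall>i. i \<notin> C \<longrightarrow> e i = d}"
  define T where "T = {F. \<forall>a b. a \<notin> A \<or> b \<notin> B \<longrightarrow> F a b = d}"
  have "finite C" using g A B bij_betw_finite by blast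
  then have M_S: "set_pmf ?M \<subseteq> S" unfolding S_def by (rule set_Pi_pmf_subset)
  have \<psi>: "bij_betw ?\<psi> S T" unfolding S_def T_def using g by (rule bij_betw_curry_reindex)
  show "pmf ?L F = pmf (map_pmf ?\<psi> ?M) F"
  proof (cases "F \<in> T")
    case True
    then obtain e where "e \<in> S" and F: "F = ?\<psi> e"
      using \<psi> by (auto simp: bij_betw_def)
    have "pmf (map_pmf ?\<psi> ?M) F = pmf ?M e"
      unfolding F using \<psi> M_S \<open>e \<in> S\<close> by (intro pmf_map_inj_on) (auto simp: bij_betw_def)
    also have "\<dots> = (\<Prod>i\<in>C. pmf p (e i))"
      using \<open>finite C\<close> \<open>e \<in> S\<close> by (simp add: pmf_Pi' S_def)
    also have "\<dots> = (\<Prod>a\<in>A. \<Prod>b\<in>B. pmf p (e (g (a, b))))"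
      by (simp add: prod.reindex_bij_betw[OF g, symmetric] prod.cartesian_product)
    also have "\<dots> = pmf ?L F"
      using True A B by (simp add: pmf_Pi_pmf_Pi_pmf F T_def)
    finally show ?thesis ..
  next
    case False
    then have "F \<notin> ?\<psi> ` set_pmf ?M" using \<psi> M_S by (auto simp: bij_betw_def)
    then have "pmf (map_pmf ?\<psi> ?M) F = 0" by (rule pmf_map_outside)
    moreover have "\<not> (\<forall>a b. a \<notin> A \<or> b \<notin> B \<longrightarrow> F a b = d)" using False by (simp add: T_def)
    ultimately show ?thesis
      by (simp only: pmf_Pi_pmf_Pi_pmf[OF A B] if_False)
  qed
qed

lemma formed_on_basis_cong:
  assumes "\<And>i. i < d \<Longrightarrow> b i = b' i"
  shows "formed_on_basis d b chi0 = formed_on_basis d b' chi0"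
  unfolding formed_on_basis_def using assms by (intro map_pmf_cong sum.cong refl) auto

lemma map_pmf_mod_formed_on_basis:
  fixes f :: "'a::field poly"
  assumes "[:0, 1:] ^ k mod f = [:r:]" and "degree f = k" and "0 < k"
  shows "map_pmf (\<lambda>p. p mod f) (formed_on_basis (m * k) (monom 1) chi0) =
    formed_on_basis k (monom 1) (map_pmf (\<lambda>X. \<Sum>i<m. r ^ i * X i) (Pi_pmf {..<m} 0 (\<lambda>_. chi0)))"
proof -
  define M where "M = Pi_pmf {..<m * k} 0 (\<lambda>_. chi0)"
  define h :: "(nat \<Rightarrow> 'a) \<Rightarrow> 'a" where "h = (\<lambda>X. \<Sum>i<m. r ^ i * X i)"
  define G where "G e = (\<Sum>j<k. monom (\<Sum>a<m. r ^ a * e (a * k + j)) j)" for e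
  have "Pi_pmf {..<k} 0 (\<lambda>_. map_pmf h (Pi_pmf {..<m} 0 (\<lambda>_. chi0))) =
      map_pmf ((\<circ>) h) (Pi_pmf {..<k} (\<lambda>_. 0) (\<lambda>_. Pi_pmf {..<m} 0 (\<lambda>_. chi0)))"
    by (rule Pi_pmf_map) (simp_all add: h_def)
  also have "Pi_pmf {..<k} (\<lambda>_. 0) (\<lambda>_. Pi_pmf {..<m} 0 (\<lambda>_. chi0)) =
      map_pmf (\<lambda>e j a. if j < k \<and> a < m then e (a * k + j) else 0) M"
    unfolding M_def using Pi_pmf_Pi_pmf_reindex[OF _ _ bij_betw_mult_add, where d = 0 and p = chi0]
    by (simp cong: if_cong)
  finally have "formed_on_basis k (monom 1) (map_pmf h (Pi_pmf {..<m} 0 (\<lambda>_. chi0))) = map_pmf G M"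
    unfolding formed_on_basis_def by (simp add: map_pmf_comp G_def h_def smult_monom cong: map_pmf_cong)
  moreover have "map_pmf (\<lambda>p. p mod f) (formed_on_basis (m * k) (monom 1) chi0) = map_pmf G M"
    unfolding formed_on_basis_def M_def G_def
    by (simp add: map_pmf_comp smult_monom mod_sum_monom_reduce[OF assms])
  ultimately show ?thesis
    unfolding h_def by simp
qed

lemma zeta_pow_Rq_eq_monom:
  assumes "i < n"
  shows "(zeta_pow_Rq n i :: 'a::field poly) = monom 1 i"
proof -
  have "degree (xn1 n :: 'a poly) = n"
    using assms by (simp add: xn1_def degree_add_eq_left degree_monom_eq)
  moreover have "[:0, 1:] ^ i = (monom 1 i :: 'a poly)" by (simp add: monom_altdef)
  ultimately show ?thesis
    using assms by (simp add: zeta_pow_Rq_def mod_poly_less degree_monom_eq)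
qed

lemma mod_eq_self_iff_degree_less:
  fixes f p :: "'a::field poly"
  assumes "0 < degree f"
  shows "p mod f = p \<longleftrightarrow> degree p < degree f"
proof -
  have "f \<noteq> 0" using assms by auto
  then show ?thesis
    using assms degree_mod_less'[of f p] by (cases "p = 0") (auto intro: mod_poly_less)
qed

theorem mainTheorem1:
  fixes n q k :: nat and f :: "'a::{field,finite} poly" and chi0 :: "'a pmf"
    and rho :: "'a poly \<Rightarrow> 'a poly" and chi :: "'a poly pmf"
  assumes "\<exists>e. n = 2 ^ e" and "n \<ge> 2"
    and "prime q" and "q mod 4 = 1" and "CARD('a) = q"
    and "f dvd xn1 n" and "irreducible f" and "degree f = k"
    and "rho = (\<lambda>p. p mod f)"
    and "chi = formed_on_basis n (zeta_pow_Rq n) chi0"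
  shows "(\<exists>c. rho (zeta_pow_Rq n k) = [:c:])
    \<and> bij_betw (\<lambda>c. \<Sum>j<k. smult (c j) (rho (zeta_pow_Rq n 1) ^ j mod f))
           ({..<k} \<rightarrow>\<^sub>E UNIV) {p. p mod f = p}
    \<and> map_pmf rho chi =
           formed_on_basis k (\<lambda>j. rho (zeta_pow_Rq n 1) ^ j mod f)
             (map_pmf (\<lambda>X. \<Sum>i<n div k. coeff (rho (zeta_pow_Rq n k)) 0 ^ i * X i)
                (Pi_pmf {..<n div k} 0 (\<lambda>_. chi0)))"
proof -
  obtain e where "n = 2 ^ e" using assms(1) by blast
  moreover have "f dvd [:0, 1:] ^ n + 1" using assms(6) by (simp add: xn1_def monom_altdef)
  ultimately have "k dvd n" "k < n" and "\<exists>r. [:0, 1:] ^ k mod f = [:r:]"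
    using irreducible_factor_X_power_plus_one[of n e f] assms(2,4,5,7,8) by auto
  then obtain r where r: "[:0, 1:] ^ k mod f = [:r:]" by blast
  have "0 < k" using degree_irreducible_pos[OF assms(7)] assms(8) by simp
  have zeta_k: "rho (zeta_pow_Rq n k) = [:r:]"
    using r \<open>k < n\<close> by (simp add: assms(9) zeta_pow_Rq_eq_monom monom_altdef)
  have basis: "rho (zeta_pow_Rq n 1) ^ j mod f = monom 1 j" if "j < k" for j
    using that assms(2,8,9) by (simp add: zeta_pow_Rq_eq_monom power_mod monom_power
        mod_poly_less degree_monom_eq)
  have "(\<Sum>j<k. smult (c j) (rho (zeta_pow_Rq n 1) ^ j mod f)) = (\<Sum>j<k. monom (c j) j)" for c
    by (intro sum.cong refl) (simp only: basis smult_monom lessThan_iff mult_1_right)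
  then have "bij_betw (\<lambda>c. \<Sum>j<k. smult (c j) (rho (zeta_pow_Rq n 1) ^ j mod f))
      ({..<k} \<rightarrow>\<^sub>E UNIV) {p. p mod f = p}"
    using bij_betw_sum_monom[OF \<open>0 < k\<close>] mod_eq_self_iff_degree_less[of f] \<open>0 < k\<close> assms(8)
    by simp
  moreover have "map_pmf rho chi =
      formed_on_basis k (monom 1) (map_pmf (\<lambda>X. \<Sum>i<n div k. r ^ i * X i) (Pi_pmf {..<n div k} 0 (\<lambda>_. chi0)))"
    using map_pmf_mod_formed_on_basis[OF r assms(8) \<open>0 < k\<close>, of "n div k" chi0]
    unfolding dvd_div_mult_self[OF \<open>k dvd n\<close>]
    by (simp add: assms(9,10) zeta_pow_Rq_eq_monom cong: formed_on_basis_cong)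
  ultimately show ?thesis
    using zeta_k basis by (auto intro!: formed_on_basis_cong)
qed
end
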